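(* Let $B$ be a board and $S$ a set of sinks such that every region of $B$ contains a sink, and let $T$ be a minimum-weight arborescence (converging to the root $r$) of the extended large tilt graph $\hat G_L(B,S)$. If $(p_1,q_1)$ and $(p_2,q_2)$ are two distinct inverse edges in $T$ whose heads $q_1$ and $q_2$ lie in the same row segment $R$, then at most one of the tails $p_1,p_2$ lies in $R$.
   Context: Pixels are unit squares indexed by $\mathbb{Z}^2$. A board $B=(V,E)$ is a finite subgraph of the square grid graph on $\mathbb{Z}^2$; regions are its connected components; its boundary consists of pixel sides not shared with a neighbouring pixel joined by an edge of $E$. $S\subseteq V$ are sinks. For a pixel $p$, its row (column) segment is the maximal set of pixels reachable from $p$ using only horizontal (vertical) edges of $E$; $p^\ell,p^r$ are the leftmost/rightmost pixels of its row segment and $p^u,p^d$ the topmost/bottommost pixels of its column segment. The full tilt graph $G_F(B)$ has vertex set $V$ and edges $(p,p^x)$ for $x\in\{\ell,r,u,d\}$, $p^x\ne p$. A corner pixel is a pixel $p$ with $p=p^x=p^y$ for some $x\in\{\ell,r\}$, $y\in\{u,d\}$. The large tilt graph $G_L(B,S)$ is the subgraph of $G_F(B)$ induced by the vertex set consisting of (i) all pixels reachable in $G_F(B)$ from corner pixels, (ii) every sink $s$ and $s^\ell,s^r,s^u,s^d$, (iii) for every reflex corner of the boundary, the endpoints of the row and column segments of the pixels incident to that corner, (iv) all pixels on the intersection of a row segment and a column segment each containing a pixel included in (i)–(iii). Extended graph: for a directed graph $G$ with sinks $S$, $\hat G$ has vertex set $V(G)\cup\{r\}$ with new root $r$ and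 edges: every edge of $G$ with weight $0$; for every edge $(p,q)$ of $G$ such that $(q,p)$ is not an edge of $G$, the inverse edge $(q,p)$ with weight $1$; and $(s,r)$ with weight $0$ for each $s\in S$. An arborescence converging to $r$ is a spanning subgraph in which every vertex other than $r$ has exactly one outgoing edge and a directed path to $r$; its weight is the sum of its edge weights. *)

theory Defs
  imports Main
begin

(* Pixels: p = (x, y); x = column index (increasing to the right),
   y = row index (increasing downwards, so "top" = smallest y).
   Pixel (x,y) occupies the unit square [x,x+1] x [y,y+1]. *)
type_synonym pixel = "int \<times> int"

definition grid_adj :: "pixel \<Rightarrow> pixel \<Rightarrow> bool" where
  "grid_adj p q \<longleftrightarrow>
     (fst p = fst q \<and> \<bar>snd p - snd q\<bar> = 1) \<or> (snd p = snd q \<and> \<bar>fst p - fst q\<bar> = 1)"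

definition board :: "pixel set \<Rightarrow> (pixel \<times> pixel) set \<Rightarrow> bool" where
  "board V E \<longleftrightarrow> finite V \<and> E \<subseteq> V \<times> V \<and> (\<forall>(p,q)\<in>E. grid_adj p q) \<and> sym E"

definition hedges :: "(pixel \<times> pixel) set \<Rightarrow> (pixel \<times> pixel) set" where
  "hedges E = {(p,q). (p,q) \<in> E \<and> snd p = snd q}"

definition vedges :: "(pixel \<times> pixel) set \<Rightarrow> (pixel \<times> pixel) set" where
  "vedges E = {(p,q). (p,q) \<in> E \<and> fst p = fst q}"

definition rowseg :: "(pixel \<times> pixel) set \<Rightarrow> pixel \<Rightarrow> pixel set" where
  "rowseg E p = (hedges E)\<^sup>* `` {p}"

definition colseg :: "(pixel \<times> pixel) set \<Rightarrow> pixel \<Rightarrow> pixel set" where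
  "colseg E p = (vedges E)\<^sup>* `` {p}"

datatype dir = Left | Right | Up | Down

fun tilt :: "(pixel \<times> pixel) set \<Rightarrow> dir \<Rightarrow> pixel \<Rightarrow> pixel" where
  "tilt E Left p = (Min (fst ` rowseg E p), snd p)"
| "tilt E Right p = (Max (fst ` rowseg E p), snd p)"
| "tilt E Up p = (fst p, Min (snd ` colseg E p))"
| "tilt E Down p = (fst p, Max (snd ` colseg E p))"

definition full_tilt_edges :: "pixel set \<Rightarrow> (pixel \<times> pixel) set \<Rightarrow> (pixel \<times> pixel) set" where
  "full_tilt_edges V E = {(p, tilt E x p) | p x. p \<in> V \<and> tilt E x p \<noteq> p}"

definition corner_pixel :: "pixel set \<Rightarrow> (pixel \<times> pixel) set \<Rightarrow> pixel \<Rightarrow> bool" where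
  "corner_pixel V E p \<longleftrightarrow> p \<in> V \<and>
     (\<exists>x\<in>{Left, Right}. \<exists>y\<in>{Up, Down}. p = tilt E x p \<and> p = tilt E y p)"

(* The four pixels around the grid point v = (i,j), in cyclic order. *)
definition quad :: "int \<times> int \<Rightarrow> nat \<Rightarrow> pixel" where
  "quad v k = (let i = fst v; j = snd v; m = k mod 4 in
     if m = 0 then (i - 1, j - 1) else if m = 1 then (i, j - 1)
     else if m = 2 then (i, j) else (i - 1, j))"

(* A grid point v is a reflex corner of the boundary if, at v, some region
   occupies an angle > 180 degrees bounded by boundary sides: there are
   cyclically consecutive pixels a,b,c,d around v with a,b,c board pixels,
   a-b and b-c joined by edges, and the side between d and a a boundary side. *)
definition reflex_corner :: "pixel set \<Rightarrow> (pixel \<times> pixel) set \<Rightarrow> int \<times> int \<Rightarrow> bool" where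
  "reflex_corner V E v \<longleftrightarrow> (\<exists>k<4.
     quad v k \<in> V \<and> quad v (k+1) \<in> V \<and> quad v (k+2) \<in> V \<and>
     (quad v k, quad v (k+1)) \<in> E \<and> (quad v (k+1), quad v (k+2)) \<in> E \<and>
     (quad v (k+3), quad v k) \<notin> E)"

definition incident_pixels :: "pixel set \<Rightarrow> int \<times> int \<Rightarrow> pixel set" where
  "incident_pixels V v = {quad v k | k. k < 4} \<inter> V"

definition large_base :: "pixel set \<Rightarrow> (pixel \<times> pixel) set \<Rightarrow> pixel set \<Rightarrow> pixel set" where
  "large_base V E S =
     {q. \<exists>c. corner_pixel V E c \<and> (c, q) \<in> (full_tilt_edges V E)\<^sup>*}
   \<union> S \<union> {tilt E x s | s x. s \<in> S}
   \<union> {tilt E x p | p x v. reflex_corner V E v \<and> p \<in> incident_pixels V v}"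

definition large_vertices :: "pixel set \<Rightarrow> (pixel \<times> pixel) set \<Rightarrow> pixel set \<Rightarrow> pixel set" where
  "large_vertices V E S = large_base V E S \<union>
     {q. \<exists>a\<in>large_base V E S. \<exists>b\<in>large_base V E S. q \<in> rowseg E a \<and> q \<in> colseg E b}"

definition large_edges :: "pixel set \<Rightarrow> (pixel \<times> pixel) set \<Rightarrow> pixel set \<Rightarrow> (pixel \<times> pixel) set" where
  "large_edges V E S = full_tilt_edges V E \<inter> (large_vertices V E S \<times> large_vertices V E S)"

(* Extended graph: pixels are Some p, the new root r is None. *)
definition ext_vertices :: "'a set \<Rightarrow> 'a option set" where
  "ext_vertices VG = Some ` VG \<union> {None}"

definition inv_edges :: "('a \<times> 'a) set \<Rightarrow> ('a option \<times> 'a option) set" where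
  "inv_edges EG = {(Some q, Some p) | p q. (p, q) \<in> EG \<and> (q, p) \<notin> EG}"

definition ext_edges :: "('a \<times> 'a) set \<Rightarrow> 'a set \<Rightarrow> ('a option \<times> 'a option) set" where
  "ext_edges EG S = {(Some p, Some q) | p q. (p, q) \<in> EG} \<union> inv_edges EG
                    \<union> {(Some s, None) | s. s \<in> S}"

definition ext_weight :: "('a \<times> 'a) set \<Rightarrow> 'a option \<times> 'a option \<Rightarrow> nat" where
  "ext_weight EG e = (if e \<in> inv_edges EG then 1 else 0)"

definition arborescence :: "'v set \<Rightarrow> ('v \<times> 'v) set \<Rightarrow> 'v \<Rightarrow> ('v \<times> 'v) set \<Rightarrow> bool" where
  "arborescence Vs Es r T \<longleftrightarrow> T \<subseteq> Es \<and>
     (\<forall>v\<in>Vs - {r}. \<exists>!u. (v, u) \<in> T) \<and>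
     (\<forall>v\<in>Vs - {r}. (v, r) \<in> T\<^sup>+)"

definition arb_weight :: "('a \<times> 'a) set \<Rightarrow> ('a option \<times> 'a option) set \<Rightarrow> nat" where
  "arb_weight EG T = (\<Sum>e\<in>T. ext_weight EG e)"

definition min_arborescence :: "'a set \<Rightarrow> ('a \<times> 'a) set \<Rightarrow> 'a set \<Rightarrow> ('a option \<times> 'a option) set \<Rightarrow> bool" where
  "min_arborescence VG EG S T \<longleftrightarrow>
     arborescence (ext_vertices VG) (ext_edges EG S) None T \<and>
     (\<forall>T'. arborescence (ext_vertices VG) (ext_edges EG S) None T' \<longrightarrow>
            arb_weight EG T \<le> arb_weight EG T')"

end

theory Submission
  imports Defs
begin

text \<open>
  A tail lying in the row segment R of its head is a horizontal tilt of that head, hence one of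
  the two ends of R. Since the out-edge of a vertex in T is unique, distinct inverse edges with
  both tails in R have distinct tails, namely both ends of R; the large tilt graph then contains
  the two weight-0 edges between these ends. As T is acyclic, one end does not reach the other
  in T; redirecting the out-edge of the other end to it keeps T an arborescence and lowers its
  weight by one, contradicting minimality.
\<close>

lemma rowseg_snd: "u \<in> rowseg E p \<Longrightarrow> snd u = snd p"
  unfolding rowseg_def Image_singleton_iff by (induction rule: rtrancl_induct) (auto simp: hedges_def)

lemma colseg_fst: "u \<in> colseg E p \<Longrightarrow> fst u = fst p"
  unfolding colseg_def Image_singleton_iff by (induction rule: rtrancl_induct) (auto simp: vedges_def)

lemma rtrancl_Image_subset:
  assumes "Range R \<subseteq> A" "p \<in> A"
  shows "R\<^sup>* `` {p} \<subseteq> A"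
  using assms by (blast elim: rtranclE)

lemma rowseg_subset: "board V E \<Longrightarrow> p \<in> V \<Longrightarrow> rowseg E p \<subseteq> V"
  unfolding rowseg_def by (rule rtrancl_Image_subset) (auto simp: board_def hedges_def)

lemma colseg_subset: "board V E \<Longrightarrow> p \<in> V \<Longrightarrow> colseg E p \<subseteq> V"
  unfolding colseg_def by (rule rtrancl_Image_subset) (auto simp: board_def vedges_def)

lemma finite_rowseg: "board V E \<Longrightarrow> finite (rowseg E p)"
  unfolding rowseg_def
  by (rule finite_subset[OF rtrancl_Image_subset[of _ "insert p V"]]) (auto simp: board_def hedges_def)

lemma finite_colseg: "board V E \<Longrightarrow> finite (colseg E p)"
  unfolding colseg_def
  by (rule finite_subset[OF rtrancl_Image_subset[of _ "insert p V"]]) (auto simp: board_def vedges_def)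

lemma rowseg_eq:
  assumes "board V E" and "q \<in> rowseg E p"
  shows "rowseg E q = rowseg E p"
proof -
  have "sym E"
    using assms(1) by (simp add: board_def)
  then have "sym (hedges E)"
    by (auto simp: hedges_def sym_def)
  then have "sym ((hedges E)\<^sup>*)"
    by (rule sym_rtrancl)
  moreover have "(p, q) \<in> (hedges E)\<^sup>*"
    using assms(2) by (simp add: rowseg_def)
  ultimately show ?thesis
    unfolding rowseg_def by (meson Image_singleton_iff rtrancl_trans subset_antisym subsetI symD)
qed

lemma tilt_mem_rowseg:
  assumes "finite (rowseg E p)" and "x \<in> {Left, Right}"
  shows "tilt E x p \<in> rowseg E p"
proof -
  have fin: "finite (fst ` rowseg E p)" and ne: "fst ` rowseg E p \<noteq> {}"
    using assms(1) by (auto simp: rowseg_def)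
  have row: "(m, snd p) \<in> rowseg E p" if m: "m \<in> fst ` rowseg E p" for m
  proof -
    obtain u where u: "u \<in> rowseg E p" "m = fst u"
      using m by blast
    then have "(m, snd p) = u"
      using rowseg_snd by (auto simp: prod_eq_iff)
    with u show ?thesis
      by simp
  qed
  show ?thesis
    using assms(2) row[OF Min_in[OF fin ne]] row[OF Max_in[OF fin ne]] by auto
qed

lemma tilt_mem_colseg:
  assumes "finite (colseg E p)" and "x \<in> {Up, Down}"
  shows "tilt E x p \<in> colseg E p"
proof -
  have fin: "finite (snd ` colseg E p)" and ne: "snd ` colseg E p \<noteq> {}"
    using assms(1) by (auto simp: colseg_def)
  have col: "(fst p, m) \<in> colseg E p" if m: "m \<in> snd ` colseg E p" for m
  proof -
    obtain u where u: "u \<in> colseg E p" "m = snd u"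
      using m by blast
    then have "(fst p, m) = u"
      using colseg_fst by (auto simp: prod_eq_iff)
    with u show ?thesis
      by simp
  qed
  show ?thesis
    using assms(2) col[OF Min_in[OF fin ne]] col[OF Max_in[OF fin ne]] by auto
qed

lemma tilt_in_board:
  assumes "board V E" and "p \<in> V"
  shows "tilt E x p \<in> V"
proof -
  have "x \<in> {Left, Right} \<or> x \<in> {Up, Down}"
    by (cases x) auto
  then show ?thesis
    using tilt_mem_rowseg[OF finite_rowseg[OF assms(1)]] tilt_mem_colseg[OF finite_colseg[OF assms(1)]]
      rowseg_subset[OF assms] colseg_subset[OF assms] by blast
qed

lemma full_tilt_edges_subset: "board V E \<Longrightarrow> full_tilt_edges V E \<subseteq> V \<times> V"
  unfolding full_tilt_edges_def using tilt_in_board by blast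

lemma large_vertices_subset:
  assumes "board V E" and "S \<subseteq> V"
  shows "large_vertices V E S \<subseteq> V"
proof -
  have "Range (full_tilt_edges V E) \<subseteq> V"
    using full_tilt_edges_subset[OF assms(1)] by blast
  then have "large_base V E S \<subseteq> V"
    using assms tilt_in_board rtrancl_Image_subset[of "full_tilt_edges V E" V]
    unfolding large_base_def corner_pixel_def incident_pixels_def by blast
  then show ?thesis
    using rowseg_subset[OF assms(1)] unfolding large_vertices_def by blast
qed

lemma finite_large_vertices:
  assumes "board V E" and "S \<subseteq> V"
  shows "finite (large_vertices V E S)"
proof -
  have "finite V"
    using assms(1) by (simp add: board_def)
  then show ?thesis
    using large_vertices_subset[OF assms] by (rule finite_subset[rotated])
qed

lemma sinks_subset_large_vertices: "S \<subseteq> large_vertices V E S"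
  unfolding large_vertices_def large_base_def by blast

lemma full_tilt_edgeI: "p \<in> V \<Longrightarrow> tilt E x p \<noteq> p \<Longrightarrow> (p, tilt E x p) \<in> full_tilt_edges V E"
  unfolding full_tilt_edges_def by blast

lemma tilt_horizontal_rowseg_invariant:
  assumes "board V E" and "u \<in> rowseg E p" and "x \<in> {Left, Right}"
  shows "tilt E x u = tilt E x p"
  using assms rowseg_eq[OF assms(1,2)] rowseg_snd[OF assms(2)] by auto

lemma full_tilt_edge_within_row:
  assumes "(q, p) \<in> full_tilt_edges V E" and "p \<in> rowseg E q"
  obtains x where "x \<in> {Left, Right}" and "p = tilt E x q"
proof -
  obtain x where x: "p = tilt E x q" "p \<noteq> q"
    using assms(1) unfolding full_tilt_edges_def by blast
  have "snd p = snd q"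
    using rowseg_snd[OF assms(2)] .
  then have "x \<notin> {Up, Down}"
    using x by (auto simp: prod_eq_iff)
  then have "x \<in> {Left, Right}"
    by (cases x) auto
  then show ?thesis
    using that x(1) by blast
qed

lemma full_tilt_edge_between_row_ends:
  assumes "board V E" and "q \<in> V" and "x \<in> {Left, Right}" and "y \<in> {Left, Right}"
    and "tilt E x q \<noteq> tilt E y q"
  shows "(tilt E x q, tilt E y q) \<in> full_tilt_edges V E"
proof -
  have end_x: "tilt E x q \<in> rowseg E q"
    using tilt_mem_rowseg[OF finite_rowseg[OF assms(1)] assms(3)] .
  then have same_end: "tilt E y (tilt E x q) = tilt E y q"
    using tilt_horizontal_rowseg_invariant assms(1,4) by blast
  have "tilt E x q \<in> V"
    using end_x rowseg_subset assms(1,2) by blast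
  moreover have "tilt E y (tilt E x q) \<noteq> tilt E x q"
    using same_end assms(5) by simp
  ultimately show ?thesis
    using full_tilt_edgeI same_end by metis
qed

lemma arborescence_out_unique:
  assumes "arborescence Vs Es r T" and "Es \<subseteq> (Vs - {r}) \<times> Vs"
    and "(u, v) \<in> T" and "(u, w) \<in> T"
  shows "v = w"
proof -
  have "u \<in> Vs - {r}"
    using assms unfolding arborescence_def by blast
  then show ?thesis
    using assms unfolding arborescence_def by blast
qed

lemma arborescence_acyclic:
  assumes arb: "arborescence Vs Es r T" and Es: "Es \<subseteq> (Vs - {r}) \<times> Vs"
  shows "acyclic T"
proof (rule acyclicI, rule allI, rule notI)
  fix a
  assume cycle: "(a, a) \<in> T\<^sup>+"
  \<comment> \<open>successors on a cycle are forced, so everything reachable from a returns to a;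
    in particular the root would have an outgoing edge\<close>
  have stays: "(v, a) \<in> T\<^sup>*" if "(a, v) \<in> T\<^sup>*" for v
    using that
  proof (induction rule: rtrancl_induct)
    case base
    then show ?case by simp
  next
    case (step v w)
    have "(v, a) \<in> T\<^sup>+"
      using step cycle by (metis rtrancl_eq_or_trancl)
    then obtain v' where "(v, v') \<in> T" "(v', a) \<in> T\<^sup>*"
      by (meson tranclD)
    with arborescence_out_unique[OF arb Es _ step(2)] show ?case
      by simp
  qed
  obtain a' where "(a, a') \<in> T"
    using cycle by (meson tranclD)
  then have "a \<in> Vs - {r}"
    using arb Es unfolding arborescence_def by blast
  then have "(a, r) \<in> T\<^sup>+" and "r \<noteq> a"
    using arb unfolding arborescence_def by auto
  then have "(r, a) \<in> T\<^sup>+"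
    using stays by (meson rtranclD trancl_into_rtrancl)
  then obtain r' where "(r, r') \<in> T"
    by (meson tranclD)
  then show False
    using arb Es unfolding arborescence_def by blast
qed

lemma arborescence_redirect:
  assumes arb: "arborescence Vs Es r T" and Es: "Es \<subseteq> (Vs - {r}) \<times> Vs"
    and xz: "(x, z) \<in> T" and xy: "(x, y) \<in> Es" and yx: "(y, x) \<notin> T\<^sup>*"
  shows "arborescence Vs Es r (insert (x, y) (T - {(x, z)}))"
proof -
  define T' where "T' = insert (x, y) (T - {(x, z)})"
  have sub: "T' \<subseteq> Es"
    using arb xy unfolding T'_def arborescence_def by blast
  have out: "\<exists>!u. (v, u) \<in> T'" if "v \<in> Vs - {r}" for v
  proof (cases "v = x")
    case True
    then show ?thesis
      using arborescence_out_unique[OF arb Es xz] unfolding T'_def by auto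
  next
    case False
    then show ?thesis
      using that arb unfolding T'_def arborescence_def by auto
  qed
  have avoiding_x: "(v, r) \<in> T'\<^sup>*" if "(v, r) \<in> T\<^sup>*" "(v, x) \<notin> T\<^sup>*" for v
    using that
  proof (induction rule: converse_rtrancl_induct)
    case base
    then show ?case by simp
  next
    case (step v u)
    then have "(u, r) \<in> T'\<^sup>*" and "(v, u) \<in> T'"
      unfolding T'_def by (auto intro: converse_rtrancl_into_rtrancl)
    then show ?case
      by (meson converse_rtrancl_into_rtrancl)
  qed
  have to_x: "(v, x) \<in> T'\<^sup>*" if "(v, x) \<in> T\<^sup>*" for v
    using that
  proof (induction rule: converse_rtrancl_induct)
    case base
    then show ?case by simp
  next
    case (step v u)
    then show ?case
      unfolding T'_def by (cases "v = x") (auto intro: converse_rtrancl_into_rtrancl)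
  qed
  have "(y, r) \<in> T'\<^sup>*"
  proof (cases "y = r")
    case False
    then have "(y, r) \<in> T\<^sup>+"
      using arb xy Es unfolding arborescence_def by blast
    then show ?thesis
      using avoiding_x yx by (meson trancl_into_rtrancl)
  qed simp
  then have x_root: "(x, r) \<in> T'\<^sup>+"
    unfolding T'_def by (auto intro: rtrancl_into_trancl2)
  have "(v, r) \<in> T'\<^sup>+" if "v \<in> Vs - {r}" for v
  proof (cases "(v, x) \<in> T\<^sup>*")
    case True
    then show ?thesis
      using to_x x_root by (meson rtrancl_trancl_trancl)
  next
    case False
    have "(v, r) \<in> T\<^sup>+"
      using that arb unfolding arborescence_def by blast
    then have "(v, r) \<in> T'\<^sup>*"
      using avoiding_x False by (meson trancl_into_rtrancl)
    then show ?thesis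
      using that by (metis DiffE insertCI rtranclD)
  qed
  then show ?thesis
    using sub out unfolding arborescence_def T'_def by blast
qed

lemma arborescence_redirect_either:
  assumes arb: "arborescence Vs Es r T" and Es: "Es \<subseteq> (Vs - {r}) \<times> Vs"
    and "(a, c) \<in> T" and "(b, d) \<in> T" and "(a, b) \<in> Es" and "(b, a) \<in> Es" and "a \<noteq> b"
  shows "arborescence Vs Es r (insert (a, b) (T - {(a, c)})) \<or>
    arborescence Vs Es r (insert (b, a) (T - {(b, d)}))"
proof (cases "(b, a) \<in> T\<^sup>*")
  case True
  then have "(b, a) \<in> T\<^sup>+"
    using \<open>a \<noteq> b\<close> by (metis rtranclD)
  then have "(a, b) \<notin> T\<^sup>*"
    using arborescence_acyclic[OF arb Es] unfolding acyclic_def by (meson rtrancl_trancl_trancl)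
  then show ?thesis
    using arborescence_redirect[OF arb Es] assms(4,6) by blast
next
  case False
  then show ?thesis
    using arborescence_redirect[OF arb Es] assms(3,5) by blast
qed

lemma sum_insert_remove_less:
  fixes w :: "'a \<Rightarrow> nat"
  assumes "finite A" and "f \<in> A" and "w e < w f"
  shows "sum w (insert e (A - {f})) < sum w A"
proof -
  have "sum w (insert e (A - {f})) \<le> w e + sum w (A - {f})"
    using assms(1) by (simp add: sum.insert_if)
  also have "\<dots> < w f + sum w (A - {f})"
    using assms(3) by simp
  also have "\<dots> = sum w A"
    using assms(1,2) by (simp add: sum.remove)
  finally show ?thesis .
qed

lemma ext_edges_subset:
  assumes "EG \<subseteq> VG \<times> VG" and "S \<subseteq> VG"
  shows "ext_edges EG S \<subseteq> (ext_vertices VG - {None}) \<times> ext_vertices VG"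
  using assms unfolding ext_edges_def inv_edges_def ext_vertices_def by auto

lemma min_arborescence_inverse_edge_tails:
  assumes min: "min_arborescence VG EG S T" and "finite VG" and EG: "EG \<subseteq> VG \<times> VG" and "S \<subseteq> VG"
    and ac: "(Some a, Some c) \<in> T \<inter> inv_edges EG" and bd: "(Some b, Some d) \<in> T \<inter> inv_edges EG"
    and "(a, c) \<noteq> (b, d)"
  shows "a \<noteq> b" and "(a, b) \<notin> EG \<or> (b, a) \<notin> EG"
proof -
  let ?Vs = "ext_vertices VG" and ?Es = "ext_edges EG S" and ?w = "ext_weight EG"
  have arb: "arborescence ?Vs ?Es None T"
    and least: "\<And>T'. arborescence ?Vs ?Es None T' \<Longrightarrow> sum ?w T \<le> sum ?w T'"
    using min unfolding min_arborescence_def arb_weight_def by auto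
  have Es: "?Es \<subseteq> (?Vs - {None}) \<times> ?Vs"
    using ext_edges_subset[OF EG \<open>S \<subseteq> VG\<close>] .
  show "a \<noteq> b"
    using arborescence_out_unique[OF arb Es] ac bd \<open>(a, c) \<noteq> (b, d)\<close> by blast
  have "finite ?Es"
    using Es \<open>finite VG\<close> by (auto simp: ext_vertices_def intro: finite_subset)
  then have "finite T"
    using arb unfolding arborescence_def by (auto intro: finite_subset)
  show "(a, b) \<notin> EG \<or> (b, a) \<notin> EG"
  proof (rule ccontr)
    assume "\<not> ?thesis"
    then have ab: "(a, b) \<in> EG" and ba: "(b, a) \<in> EG"
      by auto
    then have "(Some a, Some b) \<in> ?Es" "(Some b, Some a) \<in> ?Es"
      unfolding ext_edges_def by auto
    moreover have "?w (Some a, Some b) < ?w (Some a, Some c)" "?w (Some b, Some a) < ?w (Some b, Some d)"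
      using ab ba ac bd unfolding ext_weight_def inv_edges_def by auto
    ultimately obtain T' where "arborescence ?Vs ?Es None T'" "sum ?w T' < sum ?w T"
      using arborescence_redirect_either[OF arb Es] sum_insert_remove_less[OF \<open>finite T\<close>]
        ac bd \<open>a \<noteq> b\<close> by (metis IntD1 option.inject)
    then show False
      using least by (meson not_le)
  qed
qed

theorem mainTheorem6:
  fixes V :: "pixel set" and E :: "(pixel \<times> pixel) set" and S :: "pixel set"
    and T :: "(pixel option \<times> pixel option) set"
    and p1 q1 p2 q2 :: pixel
  assumes "board V E"
    and "S \<subseteq> V"
    and "\<forall>v\<in>V. \<exists>s\<in>S. (v, s) \<in> E\<^sup>*"
    and "min_arborescence (large_vertices V E S) (large_edges V E S) S T"
    and "(Some p1, Some q1) \<in> T \<inter> inv_edges (large_edges V E S)"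
    and "(Some p2, Some q2) \<in> T \<inter> inv_edges (large_edges V E S)"
    and "(p1, q1) \<noteq> (p2, q2)"
    and "q2 \<in> rowseg E q1"
  shows "\<not> (p1 \<in> rowseg E q1 \<and> p2 \<in> rowseg E q1)"
proof
  \<comment> \<open>the hypothesis that every region contains a sink only ensures that T exists\<close>
  assume tails: "p1 \<in> rowseg E q1 \<and> p2 \<in> rowseg E q1"
  let ?LV = "large_vertices V E S" and ?EG = "large_edges V E S"
  have EG: "?EG \<subseteq> ?LV \<times> ?LV"
    unfolding large_edges_def by auto
  note tails_in_G = min_arborescence_inverse_edge_tails[OF assms(4)
      finite_large_vertices[OF assms(1,2)] EG sinks_subset_large_vertices assms(5-7)]
  have q1p1: "(q1, p1) \<in> full_tilt_edges V E" and q2p2: "(q2, p2) \<in> full_tilt_edges V E"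
    and "p1 \<in> ?LV" "p2 \<in> ?LV"
    using assms(5,6) unfolding inv_edges_def large_edges_def by auto
  obtain x1 where x1: "x1 \<in> {Left, Right}" "p1 = tilt E x1 q1"
    using full_tilt_edge_within_row q1p1 tails by blast
  have "p2 \<in> rowseg E q2"
    using tails rowseg_eq[OF assms(1,8)] by simp
  then obtain x2 where x2: "x2 \<in> {Left, Right}" "p2 = tilt E x2 q2"
    using full_tilt_edge_within_row q2p2 by blast
  then have "p2 = tilt E x2 q1"
    using tilt_horizontal_rowseg_invariant[OF assms(1,8)] by simp
  moreover have "q1 \<in> V"
    using subsetD[OF full_tilt_edges_subset[OF assms(1)] q1p1] by simp
  ultimately have "(p1, p2) \<in> full_tilt_edges V E" "(p2, p1) \<in> full_tilt_edges V E"
    using full_tilt_edge_between_row_ends[OF assms(1)] x1 x2 tails_in_G(1) by auto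
  then show False
    using tails_in_G(2) \<open>p1 \<in> ?LV\<close> \<open>p2 \<in> ?LV\<close> unfolding large_edges_def by blast
qed

end
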